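(* Every locally strongly bounded CB-generated Polish group is SB-generated.
   Context: A topological group is Polish if it is separable and completely metrizable. A subset of a topological group $G$ is coarsely bounded if it has finite diameter in every continuous left-invariant metric on $G$; $G$ is CB-generated if generated by a coarsely bounded subset. A subset of $G$ is strongly bounded if it has finite diameter in every left-invariant metric on $G$; $G$ is SB-generated if generated by a strongly bounded subset, and locally strongly bounded if some open neighborhood of the identity is strongly bounded. *)

theory Defs
  imports "HOL-Analysis.Analysis" "HOL-Algebra.Generated_Groups"
begin

definition topological_group :: "('a, 'b) monoid_scheme \<Rightarrow> 'a topology \<Rightarrow> bool" where
  "topological_group G X \<longleftrightarrow> group G \<and> topspace X = carrier G \<and>
     continuous_map (prod_topology X X) X (\<lambda>p. fst p \<otimes>\<^bsub>G\<^esub> snd p) \<and>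
     continuous_map X X (\<lambda>x. inv\<^bsub>G\<^esub> x)"

definition Polish_space :: "'a topology \<Rightarrow> bool" where
  "Polish_space X \<longleftrightarrow> separable_space X \<and> completely_metrizable_space X"

definition Polish_group :: "('a, 'b) monoid_scheme \<Rightarrow> 'a topology \<Rightarrow> bool" where
  "Polish_group G X \<longleftrightarrow> topological_group G X \<and> Polish_space X"

definition left_invariant_metric :: "('a, 'b) monoid_scheme \<Rightarrow> ('a \<Rightarrow> 'a \<Rightarrow> real) \<Rightarrow> bool" where
  "left_invariant_metric G d \<longleftrightarrow> Metric_space (carrier G) d \<and>
     (\<forall>g\<in>carrier G. \<forall>x\<in>carrier G. \<forall>y\<in>carrier G. d (g \<otimes>\<^bsub>G\<^esub> x) (g \<otimes>\<^bsub>G\<^esub> y) = d x y)"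

definition finite_diameter :: "('a \<Rightarrow> 'a \<Rightarrow> real) \<Rightarrow> 'a set \<Rightarrow> bool" where
  "finite_diameter d A \<longleftrightarrow> (\<exists>B. \<forall>x\<in>A. \<forall>y\<in>A. d x y \<le> B)"

definition coarsely_bounded :: "('a, 'b) monoid_scheme \<Rightarrow> 'a topology \<Rightarrow> 'a set \<Rightarrow> bool" where
  "coarsely_bounded G X A \<longleftrightarrow> A \<subseteq> carrier G \<and>
     (\<forall>d. left_invariant_metric G d \<and> continuous_map (prod_topology X X) euclideanreal (\<lambda>p. d (fst p) (snd p))
          \<longrightarrow> finite_diameter d A)"

definition strongly_bounded :: "('a, 'b) monoid_scheme \<Rightarrow> 'a set \<Rightarrow> bool" where
  "strongly_bounded G A \<longleftrightarrow> A \<subseteq> carrier G \<and>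
     (\<forall>d. left_invariant_metric G d \<longrightarrow> finite_diameter d A)"

definition CB_generated :: "('a, 'b) monoid_scheme \<Rightarrow> 'a topology \<Rightarrow> bool" where
  "CB_generated G X \<longleftrightarrow> (\<exists>A. coarsely_bounded G X A \<and> generate G A = carrier G)"

definition SB_generated :: "('a, 'b) monoid_scheme \<Rightarrow> bool" where
  "SB_generated G \<longleftrightarrow> (\<exists>A. strongly_bounded G A \<and> generate G A = carrier G)"

definition locally_strongly_bounded :: "('a, 'b) monoid_scheme \<Rightarrow> 'a topology \<Rightarrow> bool" where
  "locally_strongly_bounded G X \<longleftrightarrow>
     (\<exists>U. openin X U \<and> \<one>\<^bsub>G\<^esub> \<in> U \<and> strongly_bounded G U)"

end

theory Submission
  imports Defs
begin

text \<open>Let \<open>U\<close> be a strongly bounded open identity neighbourhood and \<open>c\<^sub>0, c\<^sub>1, \<dots>\<close> a dense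
  sequence. The subgroups \<open>H\<^sub>n\<close> generated by \<open>U \<union> {c\<^sub>0, \<dots>, c\<^sub>n}\<close> are open, increase and
  exhaust \<open>G\<close>, so the index of the first \<open>H\<^sub>n\<close> containing \<open>g\<close> is a continuous group seminorm.
  Added to a continuous group norm (Birkhoff--Kakutani) it yields a continuous left-invariant
  metric. The coarsely bounded generating set is bounded in this metric, hence lies in a single
  \<open>H\<^sub>N\<close>, and then \<open>U \<union> {c\<^sub>0, \<dots>, c\<^sub>N}\<close> is a strongly bounded generating set.\<close>

definition group_seminorm :: "('a, 'b) monoid_scheme \<Rightarrow> ('a \<Rightarrow> real) \<Rightarrow> bool" where
  "group_seminorm G N \<longleftrightarrow> N \<one>\<^bsub>G\<^esub> = 0 \<and>
     (\<forall>x\<in>carrier G. N (inv\<^bsub>G\<^esub> x) = N x) \<and>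
     (\<forall>x\<in>carrier G. \<forall>y\<in>carrier G. N (x \<otimes>\<^bsub>G\<^esub> y) \<le> N x + N y)"

definition group_norm_dist :: "('a, 'b) monoid_scheme \<Rightarrow> ('a \<Rightarrow> real) \<Rightarrow> 'a \<Rightarrow> 'a \<Rightarrow> real" where
  "group_norm_dist G N x y =
     (if x \<in> carrier G \<and> y \<in> carrier G then N (inv\<^bsub>G\<^esub> x \<otimes>\<^bsub>G\<^esub> y) else 0)"

context group begin

lemma group_seminorm_nonneg:
  assumes N: "group_seminorm G N" and x: "x \<in> carrier G"
  shows "0 \<le> N x"
proof -
  have "N \<one> \<le> N x + N (inv x)"
    using N x unfolding group_seminorm_def by (metis inv_closed r_inv)
  then show ?thesis using N x by (simp add: group_seminorm_def)
qed

lemma group_seminorm_inv_mult_swap: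
  assumes N: "group_seminorm G N" and "x \<in> carrier G" "y \<in> carrier G"
  shows "N (inv y \<otimes> x) = N (inv x \<otimes> y)"
proof -
  have "inv (inv x \<otimes> y) = inv y \<otimes> x" using assms by (simp add: inv_mult_group)
  then show ?thesis using N assms by (metis group_seminorm_def inv_closed m_closed)
qed

lemma group_seminorm_le_add_diff:
  assumes N: "group_seminorm G N" and x: "x \<in> carrier G" and y: "y \<in> carrier G"
  shows "N y \<le> N x + N (inv x \<otimes> y)"
proof -
  have "N (x \<otimes> (inv x \<otimes> y)) \<le> N x + N (inv x \<otimes> y)"
    using N x y unfolding group_seminorm_def by simp
  then show ?thesis using x y by (simp add: m_assoc[symmetric])
qed

lemma group_seminorm_add:
  assumes "group_seminorm G N" "group_seminorm G M"
  shows "group_seminorm G (\<lambda>x. N x + M x)"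
  using assms unfolding group_seminorm_def by (smt (verit))

lemma left_invariant_metric_group_norm_dist:
  assumes N: "group_seminorm G N" and definite: "\<And>x. x \<in> carrier G \<Longrightarrow> N x = 0 \<Longrightarrow> x = \<one>"
  shows "left_invariant_metric G (group_norm_dist G N)"
  unfolding left_invariant_metric_def
proof (intro conjI ballI)
  show "Metric_space (carrier G) (group_norm_dist G N)"
  proof
    fix x y
    show "0 \<le> group_norm_dist G N x y"
      using group_seminorm_nonneg[OF N] by (simp add: group_norm_dist_def)
    show "group_norm_dist G N x y = group_norm_dist G N y x"
      using group_seminorm_inv_mult_swap[OF N] by (simp add: group_norm_dist_def)
  next
    fix x y assume x: "x \<in> carrier G" and y: "y \<in> carrier G"
    have "inv x \<otimes> y = \<one> \<longleftrightarrow> x = y"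
      using x y by (metis inv_closed inv_equality inv_inv l_inv)
    then show "group_norm_dist G N x y = 0 \<longleftrightarrow> x = y"
      using N x y definite[of "inv x \<otimes> y"] by (auto simp: group_norm_dist_def group_seminorm_def)
  next
    fix x y z assume xyz: "x \<in> carrier G" "y \<in> carrier G" "z \<in> carrier G"
    have "inv x \<otimes> z = (inv x \<otimes> y) \<otimes> (inv y \<otimes> z)"
      using xyz by (simp add: m_assoc[symmetric]) (simp add: m_assoc)
    then show "group_norm_dist G N x z \<le> group_norm_dist G N x y + group_norm_dist G N y z"
      using N xyz by (simp add: group_norm_dist_def group_seminorm_def)
  qed
next
  fix g x y assume gxy: "g \<in> carrier G" "x \<in> carrier G" "y \<in> carrier G"
  have "inv (g \<otimes> x) \<otimes> (g \<otimes> y) = inv x \<otimes> y"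
    using gxy by (simp add: inv_mult_group m_assoc[symmetric]) (simp add: m_assoc)
  then show "group_norm_dist G N (g \<otimes> x) (g \<otimes> y) = group_norm_dist G N x y"
    using gxy by (simp add: group_norm_dist_def)
qed

end

lemma topological_group_topspace: "topological_group G X \<Longrightarrow> topspace X = carrier G"
  by (simp add: topological_group_def)

context group begin

lemma continuous_map_inv_mult:
  assumes "topological_group G X"
  shows "continuous_map (prod_topology X X) X (\<lambda>p. inv (fst p) \<otimes> snd p)"
proof -
  have mult: "continuous_map (prod_topology X X) X (\<lambda>p. fst p \<otimes> snd p)"
    and inv: "continuous_map X X (\<lambda>x. inv x)"
    using assms by (auto simp: topological_group_def)
  have "continuous_map (prod_topology X X) (prod_topology X X) (\<lambda>p. (inv (fst p), snd p))"
    by (intro continuous_map_pairedI continuous_map_compose[OF continuous_map_fst inv, unfolded o_def]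
        continuous_map_snd)
  from continuous_map_compose[OF this mult] show ?thesis by (simp add: o_def)
qed

lemma continuous_map_group_norm_dist:
  assumes tg: "topological_group G X" and N: "continuous_map X euclideanreal N"
  shows "continuous_map (prod_topology X X) euclideanreal (\<lambda>p. group_norm_dist G N (fst p) (snd p))"
proof (rule continuous_map_eq)
  show "continuous_map (prod_topology X X) euclideanreal (N \<circ> (\<lambda>p. inv (fst p) \<otimes> snd p))"
    by (rule continuous_map_compose[OF continuous_map_inv_mult[OF tg] N])
  show "(N \<circ> (\<lambda>p. inv (fst p) \<otimes> snd p)) p = group_norm_dist G N (fst p) (snd p)"
    if "p \<in> topspace (prod_topology X X)" for p
    using that topological_group_topspace[OF tg] by (cases p) (simp add: group_norm_dist_def)
qed

lemma openin_left_translate_preimage: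
  assumes tg: "topological_group G X" and W: "openin X W" and c: "c \<in> carrier G"
  shows "openin X {z \<in> carrier G. c \<otimes> z \<in> W}"
proof -
  have mult: "continuous_map (prod_topology X X) X (\<lambda>p. fst p \<otimes> snd p)"
    using tg by (simp add: topological_group_def)
  have "continuous_map X (prod_topology X X) (\<lambda>z. (c, z))"
    using c topological_group_topspace[OF tg]
    by (intro continuous_map_pairedI continuous_map_id[unfolded id_def]) simp
  from continuous_map_compose[OF this mult]
  have "continuous_map X X (\<lambda>z. c \<otimes> z)" by (simp add: o_def)
  from openin_continuous_map_preimage[OF this W] show ?thesis
    by (simp add: topological_group_topspace[OF tg])
qed

lemma continuous_map_group_seminorm:
  assumes tg: "topological_group G X" and N: "group_seminorm G N"
    and small: "\<And>\<epsilon>. \<epsilon> > 0 \<Longrightarrow> \<exists>U. openin X U \<and> \<one> \<in> U \<and> (\<forall>u\<in>U. N u < \<epsilon>)"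
  shows "continuous_map X euclideanreal N"
proof -
  have "continuous_map X Met_TC.mtopology N"
    unfolding Met_TC.continuous_map_to_metric
  proof (intro ballI allI impI)
    fix x and \<epsilon> :: real assume "x \<in> topspace X" and "\<epsilon> > 0"
    then have x: "x \<in> carrier G" using topological_group_topspace[OF tg] by simp
    obtain U where U: "openin X U" "\<one> \<in> U" "\<forall>u\<in>U. N u < \<epsilon>" using small[OF \<open>\<epsilon> > 0\<close>] by blast
    define W where "W = {z \<in> carrier G. inv x \<otimes> z \<in> U}"
    have "openin X W" unfolding W_def by (rule openin_left_translate_preimage[OF tg U(1)]) (simp add: x)
    moreover have "x \<in> W" using x U(2) by (simp add: W_def)
    moreover have "N z \<in> Met_TC.mball (N x) \<epsilon>" if "z \<in> W" for z
    proof -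
      have z: "z \<in> carrier G" "N (inv x \<otimes> z) < \<epsilon>" using that U(3) by (auto simp: W_def)
      show ?thesis
        using group_seminorm_le_add_diff[OF N x z(1)] group_seminorm_le_add_diff[OF N z(1) x]
          group_seminorm_inv_mult_swap[OF N x z(1)] z(2)
        by (simp add: dist_real_def abs_less_iff)
    qed
    ultimately show "\<exists>W. openin X W \<and> x \<in> W \<and> (\<forall>z\<in>W. N z \<in> Met_TC.mball (N x) \<epsilon>)" by blast
  qed
  then show ?thesis by simp
qed

lemma nbhd_mult_subset:
  assumes tg: "topological_group G X" and S: "openin X S" "\<one> \<in> S"
  obtains W where "openin X W" "\<one> \<in> W" "\<And>x y. x \<in> W \<Longrightarrow> y \<in> W \<Longrightarrow> x \<otimes> y \<in> S"
proof -
  have mult: "continuous_map (prod_topology X X) X (\<lambda>p. fst p \<otimes> snd p)"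
    using tg by (simp add: topological_group_def)
  define P where "P = {p \<in> topspace (prod_topology X X). fst p \<otimes> snd p \<in> S}"
  have "openin (prod_topology X X) P"
    unfolding P_def by (rule openin_continuous_map_preimage[OF mult S(1)])
  moreover have "(\<one>, \<one>) \<in> P"
    using S(2) topological_group_topspace[OF tg] by (simp add: P_def)
  ultimately obtain U V where UV: "openin X U" "openin X V" "\<one> \<in> U" "\<one> \<in> V" "U \<times> V \<subseteq> P"
    unfolding openin_prod_topology_alt by (metis fst_conv snd_conv)
  show ?thesis
  proof (rule that[of "U \<inter> V"])
    show "x \<otimes> y \<in> S" if "x \<in> U \<inter> V" "y \<in> U \<inter> V" for x y
      using that UV(5) by (auto simp: P_def)
  qed (use UV in auto)
qed

lemma symmetric_nbhd_cube_subset: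
  assumes tg: "topological_group G X" and S: "openin X S" "\<one> \<in> S"
  obtains W where "openin X W" "\<one> \<in> W" "W \<subseteq> S" "\<And>x. x \<in> W \<Longrightarrow> inv x \<in> W"
    "\<And>x y z. x \<in> W \<Longrightarrow> y \<in> W \<Longrightarrow> z \<in> W \<Longrightarrow> x \<otimes> y \<otimes> z \<in> S"
proof -
  have top: "topspace X = carrier G" using topological_group_topspace[OF tg] .
  obtain W1 where W1: "openin X W1" "\<one> \<in> W1" "\<And>x y. x \<in> W1 \<Longrightarrow> y \<in> W1 \<Longrightarrow> x \<otimes> y \<in> S"
    using nbhd_mult_subset[OF tg S] by blast
  obtain W2 where W2: "openin X W2" "\<one> \<in> W2" "\<And>x y. x \<in> W2 \<Longrightarrow> y \<in> W2 \<Longrightarrow> x \<otimes> y \<in> W1"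
    using nbhd_mult_subset[OF tg W1(1,2)] by blast
  define W' where "W' = W1 \<inter> W2 \<inter> S"
  have W': "openin X W'" "W' \<subseteq> carrier G"
    using W1 W2 S openin_subset[of X W'] top by (auto simp: W'_def)
  define W where "W = {x \<in> topspace X. x \<in> W' \<and> inv x \<in> W'}"
  show ?thesis
  proof (rule that[of W])
    have "W = W' \<inter> {x \<in> topspace X. inv x \<in> W'}" using W' top by (auto simp: W_def)
    moreover have "continuous_map X X (\<lambda>x. inv x)" using tg by (simp add: topological_group_def)
    ultimately show "openin X W"
      using openin_continuous_map_preimage[of X X "\<lambda>x. inv x" W'] W'(1) by auto
    show "\<one> \<in> W" using W1 W2 S top by (auto simp: W_def W'_def)
    show "W \<subseteq> S" "\<And>x. x \<in> W \<Longrightarrow> inv x \<in> W" using W' top by (auto simp: W_def W'_def)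
  next
    fix x y z assume "x \<in> W" "y \<in> W" "z \<in> W"
    then have "x \<in> W1" "y \<otimes> z \<in> W1" and xyz: "x \<in> carrier G" "y \<in> carrier G" "z \<in> carrier G"
      using W2(3) W' by (auto simp: W_def W'_def)
    then have "x \<otimes> (y \<otimes> z) \<in> S" using W1(3) by blast
    then show "x \<otimes> y \<otimes> z \<in> S" using xyz by (simp add: m_assoc)
  qed
qed

end

definition word_prod :: "('a, 'b) monoid_scheme \<Rightarrow> 'a list \<Rightarrow> 'a" where
  "word_prod G ws = foldr (\<lambda>x y. x \<otimes>\<^bsub>G\<^esub> y) ws \<one>\<^bsub>G\<^esub>"

context group begin

lemma word_prod_Nil [simp]: "word_prod G [] = \<one>"
  by (simp add: word_prod_def)

lemma word_prod_Cons [simp]: "word_prod G (x # ws) = x \<otimes> word_prod G ws"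
  by (simp add: word_prod_def)

lemma word_prod_closed [simp]: "set ws \<subseteq> carrier G \<Longrightarrow> word_prod G ws \<in> carrier G"
  by (induction ws) auto

lemma word_prod_append:
  "set ws \<subseteq> carrier G \<Longrightarrow> set vs \<subseteq> carrier G \<Longrightarrow>
   word_prod G (ws @ vs) = word_prod G ws \<otimes> word_prod G vs"
  by (induction ws) (auto simp: m_assoc)

lemma word_prod_rev_map_inv:
  "set ws \<subseteq> carrier G \<Longrightarrow> word_prod G (rev (map (m_inv G) ws)) = inv (word_prod G ws)"
proof (induction ws)
  case (Cons x ws)
  have "set (rev (map (m_inv G) ws)) \<subseteq> carrier G" using Cons.prems by auto
  then show ?case using Cons by (simp add: word_prod_append inv_mult_group)
qed simp

end

lemma sum_list_balanced_split:
  fixes xs :: "real list"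
  assumes nonneg: "\<And>x. x \<in> set xs \<Longrightarrow> 0 \<le> x" and "xs \<noteq> []"
  obtains j where "j < length xs" "sum_list (take j xs) \<le> sum_list xs / 2" "xs ! j \<le> sum_list xs"
    "sum_list (drop (Suc j) xs) \<le> sum_list xs / 2"
proof -
  define S where "S = sum_list xs"
  have split: "S = sum_list (take i xs) + sum_list (drop i xs)" for i
    by (simp add: S_def flip: sum_list_append)
  have part_nonneg: "0 \<le> sum_list (take i xs)" "0 \<le> sum_list (drop i xs)" for i
    using nonneg by (auto intro!: sum_list_nonneg dest: in_set_takeD in_set_dropD)
  have pivot: "xs ! i \<le> S" if "i < length xs" for i
  proof -
    have "S = sum_list (take i xs) + xs ! i + sum_list (drop (Suc i) xs)"
      using arg_cong[OF id_take_nth_drop[OF that], of sum_list] by (simp add: S_def)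
    then show ?thesis using part_nonneg[of i] part_nonneg[of "Suc i"] by linarith
  qed
  show ?thesis
  proof (cases "S = 0")
    case True
    then show ?thesis
      using that[of 0] \<open>xs \<noteq> []\<close> pivot[of 0] split[of 1] part_nonneg[of 1] by (simp add: S_def)
  next
    case False
    have "0 \<le> S" using part_nonneg[of 0] by (simp add: S_def)
    with False have "\<not> sum_list (take (length xs) xs) \<le> S / 2" by (simp add: S_def)
    then obtain i where "i < length xs" "sum_list (take i xs) \<le> S / 2"
      "\<not> sum_list (take (Suc i) xs) \<le> S / 2"
      using ex_least_nat_less[of "\<lambda>i. \<not> sum_list (take i xs) \<le> S / 2" "length xs"] \<open>0 \<le> S\<close>
      by auto
    then show ?thesis using that[of i] pivot[of i] split[of "Suc i"] by (simp add: S_def)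
  qed
qed

text \<open>The Birkhoff--Kakutani construction of a group norm from a chain of identity neighbourhoods.\<close>

locale identity_nbhd_chain = group G for G :: "('a, 'b) monoid_scheme" (structure) +
  fixes X :: "'a topology" and V :: "nat \<Rightarrow> 'a set"
  assumes topological: "topological_group G X"
    and V_0: "V 0 = carrier G"
    and openin_V: "openin X (V n)"
    and one_in_V: "\<one> \<in> V n"
    and inv_in_V: "x \<in> V n \<Longrightarrow> inv x \<in> V n"
    and cube_in_V: "x \<in> V (Suc n) \<Longrightarrow> y \<in> V (Suc n) \<Longrightarrow> z \<in> V (Suc n) \<Longrightarrow> x \<otimes> y \<otimes> z \<in> V n"
    and V_separating: "x \<in> carrier G \<Longrightarrow> x \<noteq> \<one> \<Longrightarrow> \<exists>n. x \<notin> V n"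
begin

lemma V_subset_carrier: "V n \<subseteq> carrier G"
  using openin_subset[OF openin_V] topological_group_topspace[OF topological] by simp

lemma V_antimono: "m \<le> n \<Longrightarrow> V n \<subseteq> V m"
proof (induction n rule: dec_induct)
  case (step n)
  have "V (Suc n) \<subseteq> V n"
  proof
    fix x assume x: "x \<in> V (Suc n)"
    then have "x \<otimes> \<one> \<otimes> \<one> \<in> V n" using cube_in_V one_in_V by blast
    moreover have "x \<in> carrier G" using x V_subset_carrier by blast
    ultimately show "x \<in> V n" by simp
  qed
  with step.IH show ?case by blast
qed simp

definition rho :: "'a \<Rightarrow> real" where
  "rho g = Inf ((\<lambda>n. (1/2) ^ n) ` {n. g \<in> V n})"

lemma rho_nonneg: "g \<in> carrier G \<Longrightarrow> 0 \<le> rho g"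
  unfolding rho_def using V_0 by (intro cInf_greatest) auto

lemma rho_le: "g \<in> V n \<Longrightarrow> rho g \<le> (1/2) ^ n"
  unfolding rho_def by (rule cInf_lower) (auto intro: bdd_belowI[of _ 0])

lemma in_V_Suc_if_rho_less:
  assumes g: "g \<in> carrier G" and less: "rho g < (1/2) ^ n"
  shows "g \<in> V (Suc n)"
proof -
  obtain k where k: "g \<in> V k" "(1/2::real) ^ k < (1/2) ^ n"
    using cInf_lessD[OF _ less[unfolded rho_def]] V_0 g by auto
  then have "n < k" by (simp add: power_strict_decreasing_iff)
  then show ?thesis using V_antimono[of "Suc n" k] k(1) by auto
qed

lemma rho_inv:
  assumes "g \<in> carrier G" shows "rho (inv g) = rho g"
proof -
  have "{n. inv g \<in> V n} = {n. g \<in> V n}" using inv_in_V assms by (auto, metis inv_inv)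
  then show ?thesis by (simp add: rho_def)
qed

text \<open>The key estimate: a word of total weight below \<open>2\<^sup>-\<^sup>n\<close> splits as \<open>u x v\<close> with \<open>u\<close>, \<open>v\<close> of
  weight at most half of it and \<open>x\<close> a single letter, all three lying in \<open>V (n+1)\<close>.\<close>

lemma word_prod_in_V:
  "set ws \<subseteq> carrier G \<Longrightarrow> sum_list (map rho ws) < (1/2) ^ n \<Longrightarrow> word_prod G ws \<in> V n"
proof (induction "length ws" arbitrary: ws n rule: less_induct)
  case less
  show ?case
  proof (cases "n = 0 \<or> ws = []")
    case True
    then show ?thesis using less.prems V_0 one_in_V by auto
  next
    case False
    then obtain m where n: "n = Suc m" and "ws \<noteq> []" using not0_implies_Suc by blast
    have ws: "set ws \<subseteq> carrier G" by (rule less.prems(1))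
    define S where "S = sum_list (map rho ws)"
    have S: "S < (1/2) ^ n" using less.prems(2) by (simp add: S_def)
    obtain j where j: "j < length ws" "sum_list (map rho (take j ws)) \<le> S / 2" "rho (ws ! j) \<le> S"
      "sum_list (map rho (drop (Suc j) ws)) \<le> S / 2"
      using sum_list_balanced_split[of "map rho ws"] \<open>ws \<noteq> []\<close> ws rho_nonneg
      unfolding S_def by (auto simp: take_map drop_map)
    have parts: "set (take j ws) \<subseteq> carrier G" "set (drop (Suc j) ws) \<subseteq> carrier G" "ws ! j \<in> carrier G"
      using ws j(1) by (auto dest: in_set_takeD in_set_dropD)
    have "word_prod G (take j ws) \<in> V (Suc n)"
      using less.hyps[of "take j ws" "Suc n"] parts j(1,2) S by simp
    moreover have "ws ! j \<in> V (Suc n)"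
      using in_V_Suc_if_rho_less[OF parts(3)] j(3) S by simp
    moreover have "word_prod G (drop (Suc j) ws) \<in> V (Suc n)"
      using less.hyps[of "drop (Suc j) ws" "Suc n"] parts j(1,4) S by simp
    moreover have "word_prod G ws = word_prod G (take j ws) \<otimes> ws ! j \<otimes> word_prod G (drop (Suc j) ws)"
      using parts id_take_nth_drop[OF j(1)] word_prod_append[of "take j ws" "ws ! j # drop (Suc j) ws"]
      by (simp add: m_assoc)
    ultimately show ?thesis using cube_in_V n by simp
  qed
qed

definition bk_norm :: "'a \<Rightarrow> real" where
  "bk_norm g = Inf {sum_list (map rho ws) | ws. set ws \<subseteq> carrier G \<and> word_prod G ws = g}"

lemma bk_norm_le_word: "set ws \<subseteq> carrier G \<Longrightarrow> bk_norm (word_prod G ws) \<le> sum_list (map rho ws)"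
  unfolding bk_norm_def
  by (rule cInf_lower) (auto intro!: bdd_belowI[of _ 0] sum_list_nonneg rho_nonneg)

lemma bk_norm_greatest:
  assumes "g \<in> carrier G"
    and "\<And>ws. set ws \<subseteq> carrier G \<Longrightarrow> word_prod G ws = g \<Longrightarrow> c \<le> sum_list (map rho ws)"
  shows "c \<le> bk_norm g"
  unfolding bk_norm_def
proof (rule cInf_greatest)
  show "{sum_list (map rho ws) | ws. set ws \<subseteq> carrier G \<and> word_prod G ws = g} \<noteq> {}"
    using assms(1) by (auto intro!: exI[of _ "[g]"])
qed (use assms(2) in blast)

lemma bk_norm_le_V:
  assumes "g \<in> V n" shows "bk_norm g \<le> (1/2) ^ n"
proof -
  have "g \<in> carrier G" using assms V_subset_carrier by blast
  then show ?thesis using bk_norm_le_word[of "[g]"] rho_le[OF assms] by simp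
qed

lemma group_seminorm_bk_norm: "group_seminorm G bk_norm"
  unfolding group_seminorm_def
proof (intro conjI ballI)
  have "0 \<le> bk_norm \<one>"
    by (rule bk_norm_greatest) (auto intro!: sum_list_nonneg rho_nonneg)
  then show "bk_norm \<one> = 0" using bk_norm_le_word[of "[]"] by simp
next
  have inv_le: "bk_norm (inv g) \<le> bk_norm g" if g: "g \<in> carrier G" for g
  proof -
    have "bk_norm (inv g) \<le> sum_list (map rho ws)"
      if "set ws \<subseteq> carrier G" "word_prod G ws = g" for ws
    proof -
      have "map rho (map (m_inv G) ws) = map rho ws" using that(1) by (auto simp: rho_inv)
      then have "sum_list (map rho (rev (map (m_inv G) ws))) = sum_list (map rho ws)"
        by (metis rev_map sum_list_rev)
      moreover have "set (rev (map (m_inv G) ws)) \<subseteq> carrier G" using that(1) by auto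
      ultimately show ?thesis
        using bk_norm_le_word[of "rev (map (m_inv G) ws)"] that word_prod_rev_map_inv by simp
    qed
    then show ?thesis by (rule bk_norm_greatest[OF g])
  qed
  fix g assume "g \<in> carrier G"
  then show "bk_norm (inv g) = bk_norm g" using inv_le[of g] inv_le[of "inv g"] by simp
next
  fix g h assume g: "g \<in> carrier G" and h: "h \<in> carrier G"
  have "bk_norm (g \<otimes> h) - sum_list (map rho vs) \<le> bk_norm g"
    if vs: "set vs \<subseteq> carrier G" "word_prod G vs = h" for vs
  proof (rule bk_norm_greatest[OF g])
    fix ws assume "set ws \<subseteq> carrier G" "word_prod G ws = g"
    with vs show "bk_norm (g \<otimes> h) - sum_list (map rho vs) \<le> sum_list (map rho ws)"
      using bk_norm_le_word[of "ws @ vs"] by (simp add: word_prod_append)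
  qed
  then have "bk_norm (g \<otimes> h) - bk_norm g \<le> bk_norm h"
    by (intro bk_norm_greatest[OF h]) (simp add: algebra_simps)
  then show "bk_norm (g \<otimes> h) \<le> bk_norm g + bk_norm h" by simp
qed

lemma bk_norm_eq_0_imp_one:
  assumes g: "g \<in> carrier G" and "bk_norm g = 0"
  shows "g = \<one>"
proof (rule ccontr)
  assume "g \<noteq> \<one>"
  then obtain n where "g \<notin> V n" using V_separating g by blast
  have "(1/2) ^ n \<le> bk_norm g"
  proof (rule bk_norm_greatest[OF g])
    fix ws assume "set ws \<subseteq> carrier G" "word_prod G ws = g"
    then show "(1/2) ^ n \<le> sum_list (map rho ws)"
      using word_prod_in_V[of ws n] \<open>g \<notin> V n\<close> by force
  qed
  moreover have "0 < (1/2::real) ^ n" by simp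
  ultimately show False using \<open>bk_norm g = 0\<close> by linarith
qed

lemma continuous_map_bk_norm: "continuous_map X euclideanreal bk_norm"
proof (rule continuous_map_group_seminorm[OF topological group_seminorm_bk_norm])
  fix \<epsilon> :: real assume "\<epsilon> > 0"
  then obtain n where n: "(1/2) ^ n < \<epsilon>" using real_arch_pow_inv[of \<epsilon> "1/2"] by auto
  have "bk_norm u < \<epsilon>" if "u \<in> V n" for u using bk_norm_le_V[OF that] n by linarith
  then show "\<exists>U. openin X U \<and> \<one> \<in> U \<and> (\<forall>u\<in>U. bk_norm u < \<epsilon>)"
    using openin_V one_in_V by blast
qed

end

text \<open>Choosing \<open>V (n+1)\<close> inside the \<open>1/(n+1)\<close>-ball of a compatible metric makes the chain
  separate points.\<close>

lemma (in group) metrizable_exists_identity_nbhd_chain: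
  assumes tg: "topological_group G X" and "metrizable_space X"
  obtains V where "identity_nbhd_chain G X V"
proof -
  obtain M m where "Metric_space M m" and X: "X = Metric_space.mtopology M m"
    using assms(2) unfolding metrizable_space_def by blast
  interpret Mt: Metric_space M m by fact
  have top: "topspace X = carrier G" using topological_group_topspace[OF tg] .
  have M: "M = carrier G" using top X by simp
  define P where "P = (\<lambda>(n::nat) W. openin X W \<and> \<one> \<in> W \<and> (\<forall>x\<in>W. inv x \<in> W) \<and> (n = 0 \<longrightarrow> W = carrier G))"
  define Q where "Q = (\<lambda>(n::nat) W W'. W' \<subseteq> Mt.mball \<one> (1 / real (Suc n)) \<and>
      (\<forall>x\<in>W'. \<forall>y\<in>W'. \<forall>z\<in>W'. x \<otimes> y \<otimes> z \<in> W))"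
  have "\<exists>V. \<forall>n. P n (V n) \<and> Q n (V n) (V (Suc n))"
  proof (rule dependent_nat_choice)
    show "\<exists>W. P 0 W" using openin_topspace[of X] top by (auto simp: P_def)
  next
    fix W n assume "P n W"
    then have W: "openin X W" "\<one> \<in> W" by (auto simp: P_def)
    have "\<one> \<in> M" using M by simp
    then have S: "openin X (W \<inter> Mt.mball \<one> (1 / real (Suc n)))" "\<one> \<in> W \<inter> Mt.mball \<one> (1 / real (Suc n))"
      using W X by auto
    obtain W' where "openin X W'" "\<one> \<in> W'" "W' \<subseteq> W \<inter> Mt.mball \<one> (1 / real (Suc n))"
      "\<And>x. x \<in> W' \<Longrightarrow> inv x \<in> W'"
      "\<And>x y z. x \<in> W' \<Longrightarrow> y \<in> W' \<Longrightarrow> z \<in> W' \<Longrightarrow> x \<otimes> y \<otimes> z \<in> W \<inter> Mt.mball \<one> (1 / real (Suc n))"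
      using symmetric_nbhd_cube_subset[OF tg S] by blast
    then have "P (Suc n) W' \<and> Q n W W'" by (auto simp: P_def Q_def)
    then show "\<exists>W'. P (Suc n) W' \<and> Q n W W'" ..
  qed
  then obtain V where V: "\<And>n. P n (V n)" "\<And>n. Q n (V n) (V (Suc n))" by blast
  have "identity_nbhd_chain G X V"
  proof
    fix x assume x: "x \<in> carrier G" "x \<noteq> \<one>"
    then have "0 < m \<one> x" using M Mt.zero[of \<one> x] Mt.nonneg[of \<one> x] by auto
    then obtain n where n: "inverse (real (Suc n)) < m \<one> x" using reals_Archimedean by blast
    have "x \<notin> V (Suc n)"
    proof
      assume "x \<in> V (Suc n)"
      then have "x \<in> Mt.mball \<one> (1 / real (Suc n))" using V(2)[of n] by (auto simp: Q_def)
      then show False using n by (simp add: inverse_eq_divide)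
    qed
    then show "\<exists>n. x \<notin> V n" by blast
  qed (use tg V in \<open>auto simp: P_def Q_def\<close>)
  then show ?thesis by (rule that)
qed

lemma (in group) metrizable_exists_continuous_group_norm:
  assumes "topological_group G X" and "metrizable_space X"
  shows "\<exists>N. group_seminorm G N \<and> (\<forall>x\<in>carrier G. N x = 0 \<longrightarrow> x = \<one>) \<and>
    continuous_map X euclideanreal N"
proof -
  obtain V where "identity_nbhd_chain G X V"
    using metrizable_exists_identity_nbhd_chain[OF assms] .
  then interpret identity_nbhd_chain G X V .
  show ?thesis using group_seminorm_bk_norm bk_norm_eq_0_imp_one continuous_map_bk_norm by blast
qed

text \<open>Only meaningful for \<open>g\<close> in some \<open>H n\<close>: otherwise \<open>LEAST\<close> returns an unspecified value.\<close>

definition chain_index :: "(nat \<Rightarrow> 'a set) \<Rightarrow> 'a \<Rightarrow> nat" where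
  "chain_index H g = (LEAST n. g \<in> H n)"

lemma chain_index_mem: "g \<in> H n \<Longrightarrow> g \<in> H (chain_index H g)"
  unfolding chain_index_def by (rule LeastI)

lemma chain_index_le: "g \<in> H n \<Longrightarrow> chain_index H g \<le> n"
  unfolding chain_index_def by (rule Least_le)

lemma mem_chain_iff_chain_index_le:
  assumes "mono H" and "g \<in> H m"
  shows "g \<in> H n \<longleftrightarrow> chain_index H g \<le> n"
  using chain_index_le[of g H] chain_index_mem[of g H m] assms monoD[of H] by blast

context group begin

lemma group_seminorm_chain_index:
  assumes sub: "\<And>n. subgroup (H n) G" and mono: "mono H"
    and cover: "\<And>g. g \<in> carrier G \<Longrightarrow> \<exists>n. g \<in> H n"
  shows "group_seminorm G (\<lambda>g. real (chain_index H g))"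
  unfolding group_seminorm_def
proof (intro conjI ballI)
  show "real (chain_index H \<one>) = 0"
    using chain_index_le[of \<one> H 0] subgroup.one_closed[OF sub] by simp
next
  fix g assume g: "g \<in> carrier G"
  have "inv g \<in> H n \<longleftrightarrow> g \<in> H n" for n
    using subgroup.m_inv_closed[OF sub] g by (metis inv_inv)
  then show "real (chain_index H (inv g)) = real (chain_index H g)" by (simp add: chain_index_def)
next
  fix g h assume g: "g \<in> carrier G" and h: "h \<in> carrier G"
  define n where "n = chain_index H g + chain_index H h"
  have "g \<in> H n" "h \<in> H n"
    using mem_chain_iff_chain_index_le[OF mono] cover g h by (force simp: n_def)+
  then have "g \<otimes> h \<in> H n" by (rule subgroup.m_closed[OF sub])
  then show "real (chain_index H (g \<otimes> h)) \<le> real (chain_index H g) + real (chain_index H h)"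
    using chain_index_le by (simp add: n_def flip: of_nat_add)
qed

lemma continuous_map_chain_index:
  assumes tg: "topological_group G X" and sub: "\<And>n. subgroup (H n) G" and mono: "mono H"
    and cover: "\<And>g. g \<in> carrier G \<Longrightarrow> \<exists>n. g \<in> H n"
    and U: "openin X U" "\<one> \<in> U" "U \<subseteq> H 0"
  shows "continuous_map X euclideanreal (\<lambda>g. real (chain_index H g))"
proof (rule continuous_map_group_seminorm[OF tg group_seminorm_chain_index[OF sub mono cover]])
  fix \<epsilon> :: real assume "\<epsilon> > 0"
  moreover have "chain_index H u = 0" if "u \<in> U" for u using chain_index_le[of u H 0] U(3) that by auto
  ultimately show "\<exists>W. openin X W \<and> \<one> \<in> W \<and> (\<forall>u\<in>W. real (chain_index H u) < \<epsilon>)"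
    using U(1,2) by auto
qed

lemma coarsely_bounded_imp_bdd_above_seminorm:
  assumes tg: "topological_group G X" and "metrizable_space X" and A: "coarsely_bounded G X A"
    and N: "group_seminorm G N" and N_cont: "continuous_map X euclideanreal N"
  shows "bdd_above (N ` A)"
proof (cases "A = {}")
  case False
  \<comment> \<open>\<open>N0\<close> only serves to make \<open>N + N0\<close> definite, so that coarse boundedness applies.\<close>
  obtain N0 where N0: "group_seminorm G N0" "\<forall>x\<in>carrier G. N0 x = 0 \<longrightarrow> x = \<one>"
    "continuous_map X euclideanreal N0"
    using metrizable_exists_continuous_group_norm[OF tg assms(2)] by blast
  define d where "d = group_norm_dist G (\<lambda>x. N x + N0 x)"
  have "left_invariant_metric G d"
    unfolding d_def
  proof (rule left_invariant_metric_group_norm_dist[OF group_seminorm_add[OF N N0(1)]])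
    fix x assume "x \<in> carrier G" "N x + N0 x = 0"
    moreover from this have "0 \<le> N x" "0 \<le> N0 x"
      using group_seminorm_nonneg N N0(1) by blast+
    ultimately show "x = \<one>" using N0(2) by auto
  qed
  moreover have "continuous_map (prod_topology X X) euclideanreal (\<lambda>p. d (fst p) (snd p))"
    unfolding d_def by (intro continuous_map_group_norm_dist[OF tg] continuous_map_add N_cont N0(3))
  ultimately obtain B where B: "\<forall>x\<in>A. \<forall>y\<in>A. d x y \<le> B"
    using A by (auto simp: coarsely_bounded_def finite_diameter_def)
  obtain a0 where a0: "a0 \<in> A" using False by blast
  have A_carrier: "A \<subseteq> carrier G" using A by (simp add: coarsely_bounded_def)
  have "N a \<le> N a0 + B" if a: "a \<in> A" for a
  proof -
    have carrier: "a \<in> carrier G" "a0 \<in> carrier G" using a a0 A_carrier by auto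
    have "N a \<le> N a0 + N (inv a0 \<otimes> a)" using group_seminorm_le_add_diff[OF N carrier(2,1)] .
    also have "N (inv a0 \<otimes> a) \<le> d a0 a"
      using carrier group_seminorm_nonneg[OF N0(1), of "inv a0 \<otimes> a"] by (simp add: d_def group_norm_dist_def)
    also have "d a0 a \<le> B" using B a a0 by blast
    finally show ?thesis by simp
  qed
  then show ?thesis by (intro bdd_aboveI2)
qed simp

lemma coarsely_bounded_subset_chain:
  fixes H :: "nat \<Rightarrow> 'a set"
  assumes tg: "topological_group G X" and "metrizable_space X" and A: "coarsely_bounded G X A"
    and sub: "\<And>n. subgroup (H n) G" and mono: "mono H"
    and cover: "\<And>g. g \<in> carrier G \<Longrightarrow> \<exists>n. g \<in> H n"
    and U: "openin X U" "\<one> \<in> U" "U \<subseteq> H 0"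
  shows "\<exists>n. A \<subseteq> H n"
proof -
  have "bdd_above ((\<lambda>g. real (chain_index H g)) ` A)"
    using coarsely_bounded_imp_bdd_above_seminorm[OF tg assms(2) A group_seminorm_chain_index[OF sub mono cover]
        continuous_map_chain_index[OF tg sub mono cover U]] .
  then obtain B where B: "\<And>a. a \<in> A \<Longrightarrow> real (chain_index H a) \<le> B"
    by (auto simp: bdd_above_def)
  have "A \<subseteq> H (nat \<lceil>B\<rceil>)"
  proof
    fix a assume a: "a \<in> A"
    then have "a \<in> carrier G" using A by (auto simp: coarsely_bounded_def)
    then obtain m where "a \<in> H m" using cover by blast
    moreover have "chain_index H a \<le> nat \<lceil>B\<rceil>" using B[OF a] by linarith
    ultimately show "a \<in> H (nat \<lceil>B\<rceil>)" using mem_chain_iff_chain_index_le[OF mono] by blast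
  qed
  then show ?thesis ..
qed

lemma separable_exists_generating_chain:
  assumes tg: "topological_group G X" and "separable_space X" and U: "openin X U" "\<one> \<in> U"
  shows "\<exists>c :: nat \<Rightarrow> 'a. range c \<subseteq> carrier G \<and>
    (\<forall>g\<in>carrier G. \<exists>n. g \<in> generate G (U \<union> c ` {..n}))"
proof -
  have top: "topspace X = carrier G" using topological_group_topspace[OF tg] .
  obtain C where C: "countable C" "C \<subseteq> topspace X" "X closure_of C = topspace X"
    using assms(2) by (auto simp: separable_space_def)
  have "C \<noteq> {}"
  proof
    assume "C = {}"
    then have "carrier G = {}" using C(3) top by simp
    then show False using one_closed by blast
  qed
  define c where "c = from_nat_into C"
  have c: "range c = C" using C(1) \<open>C \<noteq> {}\<close> by (simp add: c_def range_from_nat_into)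
  have cover: "\<exists>n. g \<in> generate G (U \<union> c ` {..n})" if g: "g \<in> carrier G" for g
  proof -
    define T where "T = {z \<in> carrier G. inv g \<otimes> z \<in> U}"
    have "openin X T" unfolding T_def
      using g by (intro openin_left_translate_preimage[OF tg U(1)]) simp
    moreover have "g \<in> T" using g U(2) by (simp add: T_def)
    ultimately have "C \<inter> T \<noteq> {}" using C(3) unfolding dense_intersects_open by blast
    then obtain x where "x \<in> C" "x \<in> T" by blast
    then obtain n where "c n \<in> T" using c by (metis rangeE)
    then have n: "c n \<in> carrier G" "inv g \<otimes> c n \<in> U" by (simp_all add: T_def)
    have "c n \<in> generate G (U \<union> c ` {..n})" by (rule generate.incl) simp
    moreover have "inv (inv g \<otimes> c n) \<in> generate G (U \<union> c ` {..n})"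
      by (rule generate.inv) (simp add: n(2))
    ultimately have "c n \<otimes> inv (inv g \<otimes> c n) \<in> generate G (U \<union> c ` {..n})"
      by (rule generate.eng)
    moreover have "c n \<otimes> inv (inv g \<otimes> c n) = g"
      using g n(1) by (simp add: inv_mult_group m_assoc[symmetric])
    ultimately show ?thesis by (intro exI[of _ n]) simp
  qed
  moreover have "range c \<subseteq> carrier G" using C(2) c top by simp
  ultimately show ?thesis by blast
qed

end

lemma finite_diameter_finite: "finite A \<Longrightarrow> finite_diameter d A"
  unfolding finite_diameter_def
  by (intro exI[of _ "Max (case_prod d ` (A \<times> A))"]) (auto intro: Max_ge)

lemma (in Metric_space) finite_diameter_Un:
  assumes "A \<subseteq> M" "B \<subseteq> M" and "finite_diameter d A" "finite_diameter d B"
  shows "finite_diameter d (A \<union> B)"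
proof (cases "A = {} \<or> B = {}")
  case False
  then obtain a b where ab: "a \<in> A" "b \<in> B" by blast
  obtain DA DB where DA: "\<forall>x\<in>A. \<forall>y\<in>A. d x y \<le> DA" and DB: "\<forall>x\<in>B. \<forall>y\<in>B. d x y \<le> DB"
    using assms(3,4) unfolding finite_diameter_def by blast
  have "d a a \<le> DA" "d b b \<le> DB" using DA DB ab by blast+
  then have "0 \<le> DA" "0 \<le> DB" using nonneg[of a a] nonneg[of b b] by linarith+
  have cross: "d x y \<le> DA + d a b + DB" if "x \<in> A" "y \<in> B" for x y
  proof -
    have M: "x \<in> M" "y \<in> M" "a \<in> M" "b \<in> M" using that ab assms(1,2) by auto
    have "d x a \<le> DA" "d b y \<le> DB" using DA DB that ab by blast+
    moreover have "d x y \<le> d x a + d a y" "d a y \<le> d a b + d b y"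
      using triangle M by blast+
    ultimately show ?thesis by linarith
  qed
  have "d x y \<le> DA + d a b + DB" if xy: "x \<in> A \<union> B" "y \<in> A \<union> B" for x y
  proof -
    consider "x \<in> A" "y \<in> A" | "x \<in> A" "y \<in> B" | "x \<in> B" "y \<in> A" | "x \<in> B" "y \<in> B"
      using xy by blast
    then show ?thesis
    proof cases
      case 1
      then have "d x y \<le> DA" using DA by blast
      then show ?thesis using \<open>0 \<le> DB\<close> nonneg[of a b] by linarith
    next
      case 2
      then show ?thesis by (rule cross)
    next
      case 3
      then show ?thesis using cross[of y x] commute[of x y] by simp
    next
      case 4
      then have "d x y \<le> DB" using DB by blast
      then show ?thesis using \<open>0 \<le> DA\<close> nonneg[of a b] by linarith
    qed
  qed
  then show ?thesis unfolding finite_diameter_def by blast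
qed (use assms in auto)

lemma strongly_bounded_Un:
  "strongly_bounded G A \<Longrightarrow> strongly_bounded G B \<Longrightarrow> strongly_bounded G (A \<union> B)"
  unfolding strongly_bounded_def left_invariant_metric_def
  by (auto intro: Metric_space.finite_diameter_Un)

lemma strongly_bounded_finite: "finite A \<Longrightarrow> A \<subseteq> carrier G \<Longrightarrow> strongly_bounded G A"
  by (simp add: strongly_bounded_def finite_diameter_finite)

lemma (in group) SB_generated_if_locally_strongly_bounded_CB_generated:
  assumes tg: "topological_group G X" and sep: "separable_space X" and metr: "metrizable_space X"
    and "locally_strongly_bounded G X" and "CB_generated G X"
  shows "SB_generated G"
proof -
  obtain U where U: "openin X U" "\<one> \<in> U" "strongly_bounded G U"
    using assms(4) by (auto simp: locally_strongly_bounded_def)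
  obtain A where A: "coarsely_bounded G X A" "generate G A = carrier G"
    using assms(5) by (auto simp: CB_generated_def)
  obtain c :: "nat \<Rightarrow> 'a" where c: "range c \<subseteq> carrier G"
    "\<forall>g\<in>carrier G. \<exists>n. g \<in> generate G (U \<union> c ` {..n})"
    using separable_exists_generating_chain[OF tg sep U(1,2)] by blast
  define H where "H n = generate G (U \<union> c ` {..n})" for n
  have H: "subgroup (H n) G" for n
    unfolding H_def using U(3) c(1) by (intro generate_is_subgroup) (auto simp: strongly_bounded_def)
  have "\<exists>N. A \<subseteq> H N"
  proof (rule coarsely_bounded_subset_chain[OF tg metr A(1) H])
    show "mono H" unfolding H_def by (intro monoI mono_generate) auto
    show "U \<subseteq> H 0" unfolding H_def by (auto intro: generate.incl)
  qed (use c(2) U(1,2) in \<open>auto simp: H_def\<close>)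
  then obtain N where "A \<subseteq> H N" by blast
  then have "carrier G \<subseteq> H N" using generate_subgroup_incl[OF _ H] A(2) by blast
  then have "generate G (U \<union> c ` {..N}) = carrier G"
    using subgroup.subset[OF H] unfolding H_def by blast
  moreover have "strongly_bounded G (U \<union> c ` {..N})"
    using strongly_bounded_Un[OF U(3) strongly_bounded_finite] c(1) by auto
  ultimately show ?thesis unfolding SB_generated_def by blast
qed

theorem corollary2p13:
  fixes G :: "('a, 'b) monoid_scheme" and X :: "'a topology"
  assumes "Polish_group G X"
    and "locally_strongly_bounded G X"
    and "CB_generated G X"
  shows "SB_generated G"
proof -
  have tg: "topological_group G X" and "separable_space X" "metrizable_space X"
    using assms(1) completely_metrizable_imp_metrizable_space
    by (auto simp: Polish_group_def Polish_space_def)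
  moreover have "group G" using tg by (simp add: topological_group_def)
  ultimately show ?thesis
    using group.SB_generated_if_locally_strongly_bounded_CB_generated assms(2,3) by blast
qed

end
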